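(* Fix $\theta$. Suppose the predictions are stable in the sense that $\sqrt{K\,\mathrm{Var}(\nabla\ell_\theta(X,f^{(1)}(X))-\nabla\ell_\theta(X,\bar f(X))\mid f^{(1)})}\xrightarrow{L^1}0$ entrywise as $n\to\infty$. For $j\in[K]$ define $$\tilde L_j=\frac{1}{\sqrt N}\sum_{i=1}^N\Big(\nabla\ell_\theta(\tilde X_i,f^{(j)}(\tilde X_i))-\mathbb{E}_X[\nabla\ell_\theta(X,f^{(j)}(X))]-\big(\nabla\ell_\theta(\tilde X_i,\bar f(\tilde X_i))-\mathbb{E}[\nabla\ell_\theta(X,\bar f(X))]\big)\Big).$$ Then $\frac1K\sum_{j=1}^K\tilde L_j\xrightarrow{p}0$.
   Context: Setting: $(X_i,Y_i)_{i\le n}$ i.i.d. from $\mathbb{P}$; $\tilde X_1,\dots,\tilde X_N$ i.i.d. from the feature marginal, independent of labeled data; $X$ is an independent generic feature draw. $\ell_\theta(x,y)$ is a loss differentiable in $\theta\in\mathbb{R}^d$, $\nabla$ denotes the gradient in $\theta$. Folds $I_1,\dots,I_K$ are consecutive blocks of size $n/K$; $f^{(j)}$ is trained by a possibly randomized algorithm on $\{(X_i,Y_i)\}_{i\notin I_j}$; $\bar f(x)=\mathbb{E}[f^{(1)}(x)]$. $\mathbb{E}_X$ denotes expectation over the independent $X$ conditionally on everything else; $\mathrm{Var}(\cdot\mid f^{(1)})$ is the conditional covariance matrix. Second moments are finite. *)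

theory Defs
  imports "HOL-Probability.Probability"
begin

definition grad :: "(real^'d \<Rightarrow> 'x \<Rightarrow> 'y \<Rightarrow> real) \<Rightarrow> real^'d \<Rightarrow> 'x \<Rightarrow> 'y \<Rightarrow> real^'d" where
  "grad l th x y = (THE g. GDERIV (\<lambda>t. l t x y) th :> g)"

text \<open>Training data for fold j (folds j = 1..k are consecutive blocks of size n div k of the
  indices 0..<n): the labeled data with block I_j removed, re-indexed in order as 0..<n - n div k.\<close>
definition fold_train :: "nat \<Rightarrow> nat \<Rightarrow> nat \<Rightarrow> (nat \<Rightarrow> 'a) \<Rightarrow> nat \<Rightarrow> 'a" where
  "fold_train n k j d = (\<lambda>i. if i < n - n div k
      then d (if i < (j - 1) * (n div k) then i else i + n div k) else undefined)"

text \<open>Space of (algorithm randomness, labeled sample of size n).\<close>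
definition train_space :: "'r measure \<Rightarrow> ('x \<times> 'y) measure \<Rightarrow> nat \<Rightarrow> ('r \<times> (nat \<Rightarrow> 'x \<times> 'y)) measure" where
  "train_space R P n = R \<Otimes>\<^sub>M PiM {..<n} (\<lambda>_. P)"

definition feat :: "('x \<times> 'y) measure \<Rightarrow> 'x measure \<Rightarrow> 'x measure" where
  "feat P SX = distr P SX fst"

definition full_space :: "'r measure \<Rightarrow> ('x \<times> 'y) measure \<Rightarrow> 'x measure \<Rightarrow> nat \<Rightarrow> nat
    \<Rightarrow> (('r \<times> (nat \<Rightarrow> 'x \<times> 'y)) \<times> (nat \<Rightarrow> 'x)) measure" where
  "full_space R P SX N n = train_space R P n \<Otimes>\<^sub>M PiM {..<N} (\<lambda>_. feat P SX)"

definition fpred :: "('r \<Rightarrow> (nat \<Rightarrow> 'x \<times> 'y) \<Rightarrow> 'x \<Rightarrow> 'y) \<Rightarrow> nat \<Rightarrow> nat \<Rightarrow> nat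
    \<Rightarrow> 'r \<times> (nat \<Rightarrow> 'x \<times> 'y) \<Rightarrow> 'x \<Rightarrow> 'y" where
  "fpred A n k j w = A (fst w) (fold_train n k j (snd w))"

definition fbar :: "('r \<times> (nat \<Rightarrow> 'x \<times> 'y)) measure \<Rightarrow> ('r \<times> (nat \<Rightarrow> 'x \<times> 'y) \<Rightarrow> 'x \<Rightarrow> 'y::euclidean_space)
    \<Rightarrow> 'x \<Rightarrow> 'y" where
  "fbar T f x = (\<integral>w. f w x \<partial>T)"

definition condvar :: "'x measure \<Rightarrow> ('x \<Rightarrow> 'y \<Rightarrow> real^'d) \<Rightarrow> ('x \<Rightarrow> 'y) \<Rightarrow> ('x \<Rightarrow> 'y) \<Rightarrow> 'd \<Rightarrow> real" where
  "condvar PX G f fb c =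
     (\<integral>x. ((G x (f x) - G x (fb x)) $ c)\<^sup>2 \<partial>PX) - (\<integral>x. (G x (f x) - G x (fb x)) $ c \<partial>PX)\<^sup>2"

definition Ltil :: "'x measure \<Rightarrow> ('x \<Rightarrow> 'y \<Rightarrow> real^'d) \<Rightarrow> nat \<Rightarrow> ('x \<Rightarrow> 'y) \<Rightarrow> ('x \<Rightarrow> 'y)
    \<Rightarrow> (nat \<Rightarrow> 'x) \<Rightarrow> real^'d" where
  "Ltil PX G N f fb u = (1 / sqrt (real N)) *\<^sub>R
     (\<Sum>i<N. (G (u i) (f (u i)) - (\<integral>x. G x (f x) \<partial>PX))
             - (G (u i) (fb (u i)) - (\<integral>x. G x (fb x) \<partial>PX)))"

end

theory Submission
  imports Defs
begin

text \<open>Conditionally on the training data, coordinate c of the j-th summand is N^(-1/2) times a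
  sum of N i.i.d. centred variables whose variance is the conditional variance of the c-th gradient
  difference given f^(j), so its conditional L^1 norm is at most the conditional standard deviation.
  Every fold trains on a sample with the same law as fold 1, so this bound has the same expectation
  for all j. Bounding the norm of the average by the l^1 norm of its coordinates, Markov's
  inequality bounds the probability that it exceeds e by (1/e) sum_c E sqrt(Var_c(f^(1))), which
  tends to 0 by the stability hypothesis (the factor K there is only used through K \<ge> 1).\<close>

section \<open>Normalized sums of i.i.d. variables\<close>

lemma indep_vars_PiM_components:
  assumes M: "\<And>i. i \<in> I \<Longrightarrow> prob_space (M i)"
  shows "prob_space.indep_vars (PiM I M) M (\<lambda>i \<omega>. \<omega> i) I"
proof -
  interpret prob_space "PiM I M" by (rule prob_space_PiM) (rule M)
  show ?thesis
  proof (cases "I = {}")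
    case True
    then show ?thesis unfolding indep_vars_def2 indep_sets_def by simp
  next
    case False
    have "distr (PiM I M) (\<Pi>\<^sub>M i\<in>I. M (id i)) (\<lambda>\<omega>. \<lambda>i\<in>I. \<omega> (id i)) = (\<Pi>\<^sub>M i\<in>I. M (id i))"
      by (rule distr_PiM_reindex) (auto intro: M)
    then show ?thesis
      using False M by (subst indep_vars_iff_distr_eq_PiM') (auto simp: distr_PiM_component cong: PiM_cong)
  qed
qed

lemma
  fixes Z :: "'a \<Rightarrow> 'b::{banach, second_countable_topology}"
  assumes M: "\<And>j. j \<in> I \<Longrightarrow> prob_space (M j)" and i: "i \<in> I" and Z: "integrable (M i) Z"
  shows integrable_PiM_component: "integrable (PiM I M) (\<lambda>\<omega>. Z (\<omega> i))"
    and integral_PiM_component: "(\<integral>\<omega>. Z (\<omega> i) \<partial>PiM I M) = (\<integral>x. Z x \<partial>M i)"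
proof -
  have rv: "(\<lambda>\<omega>. \<omega> i) \<in> measurable (PiM I M) (M i)"
    using i by measurable
  have Zm: "Z \<in> borel_measurable (M i)"
    using Z by measurable
  have distr_eq: "distr (PiM I M) (M i) (\<lambda>\<omega>. \<omega> i) = M i"
    by (rule distr_PiM_component[OF M i])
  show "integrable (PiM I M) (\<lambda>\<omega>. Z (\<omega> i))"
    using Z by (simp flip: integrable_distr_eq[OF rv Zm] add: distr_eq)
  show "(\<integral>\<omega>. Z (\<omega> i) \<partial>PiM I M) = (\<integral>x. Z x \<partial>M i)"
    by (simp flip: integral_distr[OF rv Zm] add: distr_eq)
qed

lemma
  fixes Z :: "'a \<Rightarrow> real"
  assumes M: "prob_space M" and Z: "integrable M Z" and ik: "i \<in> I" "k \<in> I" "i \<noteq> k"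
  shows integrable_PiM_components_mult: "integrable (PiM I (\<lambda>_. M)) (\<lambda>\<omega>. Z (\<omega> i) * Z (\<omega> k))"
    and integral_PiM_components_mult:
      "(\<integral>\<omega>. Z (\<omega> i) * Z (\<omega> k) \<partial>PiM I (\<lambda>_. M)) = (\<integral>x. Z x \<partial>M) * (\<integral>x. Z x \<partial>M)"
proof -
  interpret prob_space "PiM I (\<lambda>_. M)" by (rule prob_space_PiM) (rule M)
  have "indep_vars (\<lambda>_. borel) (\<lambda>j \<omega>. Z (\<omega> j)) I"
    using Z by (intro indep_vars_compose2[OF indep_vars_PiM_components]) (auto simp: M)
  then have indep: "indep_vars (\<lambda>_. borel) (\<lambda>j \<omega>. Z (\<omega> j)) {i, k}"
    by (rule indep_vars_subset) (use ik in auto)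
  have int: "j \<in> {i, k} \<Longrightarrow> integrable (PiM I (\<lambda>_. M)) (\<lambda>\<omega>. Z (\<omega> j))" for j
    using ik by (auto intro: integrable_PiM_component M Z)
  show "integrable (PiM I (\<lambda>_. M)) (\<lambda>\<omega>. Z (\<omega> i) * Z (\<omega> k))"
    using indep_vars_integrable[OF _ indep int] ik by simp
  show "(\<integral>\<omega>. Z (\<omega> i) * Z (\<omega> k) \<partial>PiM I (\<lambda>_. M)) = (\<integral>x. Z x \<partial>M) * (\<integral>x. Z x \<partial>M)"
    using indep_vars_lebesgue_integral[OF _ indep int] ik
    by (simp add: integral_PiM_component[OF M _ Z])
qed

lemma
  fixes Z :: "'a \<Rightarrow> real"
  assumes M: "prob_space M" and I: "finite I"
    and Zm: "Z \<in> borel_measurable M" and Z2: "integrable M (\<lambda>x. (Z x)\<^sup>2)"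
    and Z0: "(\<integral>x. Z x \<partial>M) = 0"
  shows integrable_PiM_sum_square: "integrable (PiM I (\<lambda>_. M)) (\<lambda>\<omega>. (\<Sum>i\<in>I. Z (\<omega> i))\<^sup>2)"
    and integral_PiM_sum_square:
      "(\<integral>\<omega>. (\<Sum>i\<in>I. Z (\<omega> i))\<^sup>2 \<partial>PiM I (\<lambda>_. M)) = card I * (\<integral>x. (Z x)\<^sup>2 \<partial>M)"
proof -
  have Z: "integrable M Z"
    by (rule finite_measure.square_integrable_imp_integrable[OF prob_space.finite_measure[OF M] Zm Z2])
  have ZZ: "integrable M (\<lambda>x. Z x * Z x)"
    using Z2 by (simp add: power2_eq_square)
  have square: "(\<Sum>i\<in>I. Z (\<omega> i))\<^sup>2 = (\<Sum>i\<in>I. \<Sum>k\<in>I. Z (\<omega> i) * Z (\<omega> k))" for \<omega>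
    by (simp add: power2_eq_square sum_product)
  have int: "integrable (PiM I (\<lambda>_. M)) (\<lambda>\<omega>. Z (\<omega> i) * Z (\<omega> k))"
    if "i \<in> I" "k \<in> I" for i k
    using integrable_PiM_component[OF M \<open>i \<in> I\<close> ZZ] integrable_PiM_components_mult[OF M Z that]
    by (cases "i = k") simp_all
  have moment: "(\<integral>\<omega>. Z (\<omega> i) * Z (\<omega> k) \<partial>PiM I (\<lambda>_. M)) = (if i = k then \<integral>x. (Z x)\<^sup>2 \<partial>M else 0)"
    if "i \<in> I" "k \<in> I" for i k
    using integral_PiM_component[OF M \<open>i \<in> I\<close> ZZ] integral_PiM_components_mult[OF M Z that] Z0
    by (cases "i = k") (simp_all add: power2_eq_square)
  show "integrable (PiM I (\<lambda>_. M)) (\<lambda>\<omega>. (\<Sum>i\<in>I. Z (\<omega> i))\<^sup>2)"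
    unfolding square using int by (intro Bochner_Integration.integrable_sum) auto
  have "(\<integral>\<omega>. (\<Sum>i\<in>I. Z (\<omega> i))\<^sup>2 \<partial>PiM I (\<lambda>_. M))
      = (\<Sum>i\<in>I. \<Sum>k\<in>I. \<integral>\<omega>. Z (\<omega> i) * Z (\<omega> k) \<partial>PiM I (\<lambda>_. M))"
    unfolding square using int
    by (simp add: Bochner_Integration.integral_sum Bochner_Integration.integrable_sum)
  also have "\<dots> = card I * (\<integral>x. (Z x)\<^sup>2 \<partial>M)"
    using I by (simp add: moment if_distrib sum.delta cong: sum.cong)
  finally show "(\<integral>\<omega>. (\<Sum>i\<in>I. Z (\<omega> i))\<^sup>2 \<partial>PiM I (\<lambda>_. M)) = card I * (\<integral>x. (Z x)\<^sup>2 \<partial>M)" .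
qed

lemma (in prob_space) nn_integral_abs_le_sqrt_second_moment:
  fixes Y :: "'a \<Rightarrow> real"
  assumes Ym: "Y \<in> borel_measurable M" and Y2: "integrable M (\<lambda>x. (Y x)\<^sup>2)"
  shows "(\<integral>\<^sup>+x. ennreal \<bar>Y x\<bar> \<partial>M) \<le> ennreal (sqrt (\<integral>x. (Y x)\<^sup>2 \<partial>M))"
proof -
  have abs2: "integrable M (\<lambda>x. \<bar>Y x\<bar>\<^sup>2)"
    using Y2 by simp
  have abs: "integrable M (\<lambda>x. \<bar>Y x\<bar>)"
    by (rule square_integrable_imp_integrable) (use Ym abs2 in auto)
  have "(\<integral>x. \<bar>Y x\<bar> \<partial>M)\<^sup>2 \<le> (\<integral>x. (Y x)\<^sup>2 \<partial>M)"
    using variance_positive[of "\<lambda>x. \<bar>Y x\<bar>"] variance_eq[OF abs abs2] by simp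
  then have "(\<integral>x. \<bar>Y x\<bar> \<partial>M) \<le> sqrt (\<integral>x. (Y x)\<^sup>2 \<partial>M)"
    by (rule real_le_rsqrt)
  then show ?thesis
    by (simp add: nn_integral_eq_integral[OF abs] ennreal_leI)
qed

lemma (in prob_space) nn_integral_abs_normalized_sum_le_sqrt_variance:
  fixes D :: "'a \<Rightarrow> real"
  assumes I: "finite I" and Dm: "D \<in> borel_measurable M" and D2: "integrable M (\<lambda>x. (D x)\<^sup>2)"
  shows "(\<integral>\<^sup>+\<omega>. ennreal \<bar>(\<Sum>i\<in>I. D (\<omega> i) - expectation D) / sqrt (card I)\<bar> \<partial>PiM I (\<lambda>_. M))
           \<le> ennreal (sqrt (variance D))"
proof (cases "I = {}")
  case False
  interpret PiM: prob_space "PiM I (\<lambda>_. M)"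
    by (rule prob_space_PiM) (rule prob_space_axioms)
  define Z where "Z = (\<lambda>x. D x - expectation D)"
  have D: "integrable M D"
    by (rule square_integrable_imp_integrable[OF Dm D2])
  have Zm[measurable]: "Z \<in> borel_measurable M"
    using Dm by (simp add: Z_def)
  have Z2: "integrable M (\<lambda>x. (Z x)\<^sup>2)"
    using D D2 by (simp add: Z_def power2_diff)
  have Z0: "expectation Z = 0"
    using D by (simp add: Z_def prob_space)
  have card: "0 < real (card I)"
    using I False by (simp add: card_gt_0_iff)
  have square: "((\<Sum>i\<in>I. Z (\<omega> i)) / sqrt (card I))\<^sup>2 = (\<Sum>i\<in>I. Z (\<omega> i))\<^sup>2 / card I" for \<omega>
    using card by (simp add: power_divide)
  have Y2: "integrable (PiM I (\<lambda>_. M)) (\<lambda>\<omega>. ((\<Sum>i\<in>I. Z (\<omega> i)) / sqrt (card I))\<^sup>2)"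
    unfolding square using integrable_PiM_sum_square[OF prob_space_axioms I Zm Z2 Z0] by simp
  have "(\<integral>\<^sup>+\<omega>. ennreal \<bar>(\<Sum>i\<in>I. Z (\<omega> i)) / sqrt (card I)\<bar> \<partial>PiM I (\<lambda>_. M))
      \<le> ennreal (sqrt (\<integral>\<omega>. ((\<Sum>i\<in>I. Z (\<omega> i)) / sqrt (card I))\<^sup>2 \<partial>PiM I (\<lambda>_. M)))"
    by (rule PiM.nn_integral_abs_le_sqrt_second_moment[OF _ Y2]) measurable
  also have "(\<integral>\<omega>. ((\<Sum>i\<in>I. Z (\<omega> i)) / sqrt (card I))\<^sup>2 \<partial>PiM I (\<lambda>_. M)) = variance D"
    unfolding square using integral_PiM_sum_square[OF prob_space_axioms I Zm Z2 Z0] card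
    by (simp add: Z_def)
  finally show ?thesis
    by (simp add: Z_def)
qed simp

section \<open>The coordinates of \<open>Ltil\<close>\<close>

lemma borel_measurable_vec_nth[measurable (raw)]:
  fixes f :: "'a \<Rightarrow> real^'n"
  shows "f \<in> borel_measurable M \<Longrightarrow> (\<lambda>x. f x $ i) \<in> borel_measurable M"
  using measurable_compose[OF _ borel_measurable_nth] .

lemma square_component_diff_le:
  fixes a b :: "real^'d"
  shows "(a $ c - b $ c)\<^sup>2 \<le> 2 * (norm a)\<^sup>2 + 2 * (norm b)\<^sup>2"
proof -
  have "\<bar>a $ c - b $ c\<bar> \<le> norm a + norm b"
    using component_le_norm_cart[of a c] component_le_norm_cart[of b c] by linarith
  then have "(a $ c - b $ c)\<^sup>2 \<le> (norm a + norm b)\<^sup>2"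
    by (metis abs_le_square_iff abs_of_nonneg add_nonneg_nonneg norm_ge_zero power2_abs)
  also have "\<dots> \<le> 2 * (norm a)\<^sup>2 + 2 * (norm b)\<^sup>2"
    using sum_squares_bound[of "norm a" "norm b"] by (simp add: power2_sum)
  finally show ?thesis .
qed

lemma Ltil_component:
  fixes G :: "'x \<Rightarrow> 'y \<Rightarrow> real^'d"
  assumes a: "integrable PX (\<lambda>x. G x (f x))" and b: "integrable PX (\<lambda>x. G x (fb x))"
  shows "Ltil PX G N f fb u $ c
    = (\<Sum>i\<in>{..<N}. (G (u i) (f (u i)) - G (u i) (fb (u i))) $ c
                    - (\<integral>x. (G x (f x) - G x (fb x)) $ c \<partial>PX)) / sqrt (card {..<N})"
proof -
  have "(\<integral>x. (G x (f x) - G x (fb x)) $ c \<partial>PX) = ((\<integral>x. G x (f x) \<partial>PX) - (\<integral>x. G x (fb x) \<partial>PX)) $ c"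
    using integral_bounded_linear[OF bounded_linear_vec_nth, of PX "\<lambda>x. G x (f x) - G x (fb x)" c] a b
    by simp
  moreover have "Ltil PX G N f fb u = (1 / sqrt N) *\<^sub>R (\<Sum>i<N. (G (u i) (f (u i)) - G (u i) (fb (u i)))
                   - ((\<integral>x. G x (f x) \<partial>PX) - (\<integral>x. G x (fb x) \<partial>PX)))"
    unfolding Ltil_def by (simp add: algebra_simps)
  ultimately show ?thesis
    by (simp add: divide_inverse)
qed

lemma nn_integral_abs_Ltil_component_le:
  fixes G :: "'x \<Rightarrow> 'y \<Rightarrow> real^'d"
  assumes PX: "prob_space PX"
    and am: "(\<lambda>x. G x (f x)) \<in> borel_measurable PX" and bm: "(\<lambda>x. G x (fb x)) \<in> borel_measurable PX"
    and a2: "integrable PX (\<lambda>x. (norm (G x (f x)))\<^sup>2)" and b2: "integrable PX (\<lambda>x. (norm (G x (fb x)))\<^sup>2)"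
  shows "(\<integral>\<^sup>+u. ennreal \<bar>Ltil PX G N f fb u $ c\<bar> \<partial>PiM {..<N} (\<lambda>_. PX)) \<le> ennreal (sqrt (condvar PX G f fb c))"
proof -
  interpret prob_space PX by (rule PX)
  have integrable_of_square: "integrable PX g"
    if "g \<in> borel_measurable PX" "integrable PX (\<lambda>x. (norm (g x))\<^sup>2)" for g :: "'x \<Rightarrow> real^'d"
    using that square_integrable_imp_integrable[of "\<lambda>x. norm (g x)"] by (simp add: integrable_norm_iff)
  have a: "integrable PX (\<lambda>x. G x (f x))" and b: "integrable PX (\<lambda>x. G x (fb x))"
    using am bm a2 b2 by (auto intro: integrable_of_square)
  define D where "D = (\<lambda>x. (G x (f x) - G x (fb x)) $ c)"
  have Dm: "D \<in> borel_measurable PX"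
    unfolding D_def using am bm by measurable
  have "integrable PX (\<lambda>x. 2 * (norm (G x (f x)))\<^sup>2 + 2 * (norm (G x (fb x)))\<^sup>2)"
    using a2 b2 by simp
  then have D2: "integrable PX (\<lambda>x. (D x)\<^sup>2)"
  proof (rule Bochner_Integration.integrable_bound)
    show "(\<lambda>x. (D x)\<^sup>2) \<in> borel_measurable PX"
      using Dm by measurable
    show "AE x in PX. norm ((D x)\<^sup>2) \<le> norm (2 * (norm (G x (f x)))\<^sup>2 + 2 * (norm (G x (fb x)))\<^sup>2)"
      by (intro AE_I2) (simp add: D_def square_component_diff_le)
  qed
  have D: "integrable PX D"
    by (rule square_integrable_imp_integrable[OF Dm D2])
  have "condvar PX G f fb c = variance D"
    using variance_eq[OF D D2] by (simp add: condvar_def D_def)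
  moreover have "Ltil PX G N f fb u $ c = (\<Sum>i\<in>{..<N}. D (u i) - expectation D) / sqrt (card {..<N})" for u
    unfolding D_def by (rule Ltil_component[where G = G and f = f and fb = fb, OF a b])
  ultimately show ?thesis
    using nn_integral_abs_normalized_sum_le_sqrt_variance[where I = "{..<N}", OF _ Dm D2] by simp
qed

section \<open>Markov bounds\<close>

lemma norm_scaleR_sum_le_sum_abs_components:
  fixes x :: "'j \<Rightarrow> real^'d"
  shows "norm (r *\<^sub>R (\<Sum>j\<in>J. x j)) \<le> (\<Sum>c\<in>UNIV. \<Sum>j\<in>J. \<bar>r\<bar> * \<bar>x j $ c\<bar>)"
proof -
  have "norm (r *\<^sub>R (\<Sum>j\<in>J. x j)) \<le> (\<Sum>c\<in>UNIV. \<bar>(r *\<^sub>R (\<Sum>j\<in>J. x j)) $ c\<bar>)"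
    by (rule norm_le_l1_cart)
  also have "\<dots> \<le> (\<Sum>c\<in>UNIV. \<Sum>j\<in>J. \<bar>r\<bar> * \<bar>x j $ c\<bar>)"
    by (intro sum_mono) (simp add: abs_mult sum_distrib_left[symmetric] mult_left_mono sum_abs)
  finally show ?thesis .
qed

lemma Markov_emeasure_le_nn_integral:
  assumes "\<And>x. x \<in> space M \<Longrightarrow> e < f x \<Longrightarrow> ennreal e \<le> g x"
  shows "ennreal e * emeasure M {x \<in> space M. e < f x} \<le> (\<integral>\<^sup>+x. g x \<partial>M)"
proof (cases "{x \<in> space M. e < f x} \<in> sets M")
  case True
  have "ennreal e * emeasure M {x \<in> space M. e < f x} = (\<integral>\<^sup>+x. ennreal e * indicator {x \<in> space M. e < f x} x \<partial>M)"
    by (rule nn_integral_cmult_indicator[OF True, symmetric])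
  also have "\<dots> \<le> (\<integral>\<^sup>+x. g x \<partial>M)"
    using assms by (intro nn_integral_mono) (auto split: split_indicator)
  finally show ?thesis .
qed (simp add: emeasure_notin_sets)

lemma ennreal_sqrt_le_sqrt_mult:
  fixes K x :: real
  assumes "1 \<le> K"
  shows "ennreal (sqrt x) \<le> ennreal (sqrt (K * x))"
proof (cases "0 \<le> x")
  case True
  then show ?thesis
    using assms mult_right_mono[of 1 K x] by (intro ennreal_leI real_sqrt_le_mono) simp
qed (simp add: ennreal_neg)

lemma tendsto_measure_zero_of_Markov_bound:
  assumes bound: "\<And>e n. 0 < e \<Longrightarrow> ennreal e * emeasure (M n) {x \<in> space (M n). e < X n x} \<le> B n"
    and B: "B \<longlonglongrightarrow> 0"
  shows "\<forall>e>0. (\<lambda>n. measure (M n) {x \<in> space (M n). e < X n x}) \<longlonglongrightarrow> 0"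
proof (intro allI impI)
  fix e :: real
  assume e: "0 < e"
  have le: "emeasure (M n) {x \<in> space (M n). e < X n x} \<le> ennreal (1 / e) * B n" for n
  proof -
    have "emeasure (M n) {x \<in> space (M n). e < X n x}
        = ennreal (1 / e) * (ennreal e * emeasure (M n) {x \<in> space (M n). e < X n x})"
      using e by (simp add: mult.assoc[symmetric] flip: ennreal_mult)
    also have "\<dots> \<le> ennreal (1 / e) * B n"
      by (intro mult_left_mono bound e) simp
    finally show ?thesis .
  qed
  have "(\<lambda>n. ennreal (1 / e) * B n) \<longlonglongrightarrow> 0"
    using ennreal_tendsto_cmult[OF _ B, of "ennreal (1 / e)"] by simp
  then have "(\<lambda>n. emeasure (M n) {x \<in> space (M n). e < X n x}) \<longlonglongrightarrow> 0"
    by (rule tendsto_sandwich[rotated 2, OF tendsto_const]) (auto simp: le)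
  then show "(\<lambda>n. measure (M n) {x \<in> space (M n). e < X n x}) \<longlonglongrightarrow> 0"
    using tendsto_enn2real[of _ 0] by (simp add: measure_def)
qed

section \<open>Exchangeability of the folds\<close>

lemma fold_train_eq_restrict:
  "fold_train n k j d = restrict (\<lambda>i. d (if i < (j - 1) * (n div k) then i else i + n div k)) {..<n - n div k}"
  by (auto simp: fold_train_def fun_eq_iff)

lemma measurable_fold_train[measurable]:
  "fold_train n k j \<in> measurable (PiM {..<n} (\<lambda>_. M)) (PiM {..<n - n div k} (\<lambda>_. M))"
  unfolding fold_train_eq_restrict
  by (intro measurable_restrict measurable_component_singleton) auto

lemma distr_fold_train:
  assumes "prob_space M"
  shows "distr (PiM {..<n} (\<lambda>_. M)) (PiM {..<n - n div k} (\<lambda>_. M)) (fold_train n k j)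
           = PiM {..<n - n div k} (\<lambda>_. M)"
proof -
  let ?t = "\<lambda>i. if i < (j - 1) * (n div k) then i else i + n div k"
  have "distr (PiM {..<n} (\<lambda>_. M)) (\<Pi>\<^sub>M i\<in>{..<n - n div k}. M) (\<lambda>d. \<lambda>i\<in>{..<n - n div k}. d (?t i))
      = (\<Pi>\<^sub>M i\<in>{..<n - n div k}. M)"
    by (rule distr_PiM_reindex) (use assms in \<open>auto simp: inj_on_def split: if_splits\<close>)
  then show ?thesis
    unfolding fold_train_eq_restrict .
qed

lemma distr_train_space_fold_train:
  assumes P: "prob_space P" and R: "prob_space R"
  shows "distr (train_space R P n) (R \<Otimes>\<^sub>M PiM {..<n - n div k} (\<lambda>_. P)) (\<lambda>w. (fst w, fold_train n k j (snd w)))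
       = R \<Otimes>\<^sub>M PiM {..<n - n div k} (\<lambda>_. P)"
proof -
  interpret R: prob_space R by (rule R)
  interpret Pk: prob_space "PiM {..<n - n div k} (\<lambda>_. P)" by (rule prob_space_PiM) (rule P)
  have "distr R R (\<lambda>r. r) \<Otimes>\<^sub>M distr (PiM {..<n} (\<lambda>_. P)) (PiM {..<n - n div k} (\<lambda>_. P)) (fold_train n k j)
    = distr (train_space R P n) (R \<Otimes>\<^sub>M PiM {..<n - n div k} (\<lambda>_. P)) (\<lambda>(r, d). (r, fold_train n k j d))"
    unfolding train_space_def
    by (rule pair_measure_distr) (auto simp: distr_fold_train[OF P] intro: Pk.sigma_finite_measure_axioms)
  then show ?thesis
    by (simp add: distr_fold_train[OF P] split_beta')
qed

section \<open>The cross-fitting estimate for fixed n\<close>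

locale cross_fitting =
  fixes l :: "real^'d \<Rightarrow> 'x \<Rightarrow> 'y::euclidean_space \<Rightarrow> real"
    and th :: "real^'d"
    and P :: "('x \<times> 'y) measure" and SX :: "'x measure"
    and R :: "'r measure"
    and A :: "'r \<Rightarrow> (nat \<Rightarrow> 'x \<times> 'y) \<Rightarrow> 'x \<Rightarrow> 'y"
    and n k N :: nat
  assumes P: "prob_space P" and sets_P: "sets P = sets (SX \<Otimes>\<^sub>M (borel :: 'y measure))"
    and R: "prob_space R"
    and k: "0 < k"
    and measurable_grad: "(\<lambda>(x, y). grad l th x y) \<in> borel_measurable (SX \<Otimes>\<^sub>M borel)"
    and measurable_A: "(\<lambda>(v, x). A (fst v) (snd v) x)
                  \<in> borel_measurable ((R \<Otimes>\<^sub>M PiM {..<n - n div k} (\<lambda>_. P)) \<Otimes>\<^sub>M SX)"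
    and square_integrable_grad_f:
      "integrable (train_space R P n \<Otimes>\<^sub>M feat P SX)
         (\<lambda>(w, x). (norm (grad l th x (fpred A n k 1 w x)))\<^sup>2)"
    and square_integrable_grad_fbar:
      "integrable (feat P SX) (\<lambda>x. (norm (grad l th x (fbar (train_space R P n) (fpred A n k 1) x)))\<^sup>2)"
begin

abbreviation "T \<equiv> train_space R P n"
text \<open>\<open>V\<close> is the law of the input of the training algorithm: its randomness together with the
  training sample of a single fold.\<close>
abbreviation "V \<equiv> R \<Otimes>\<^sub>M PiM {..<n - n div k} (\<lambda>_. P)"
abbreviation "PX \<equiv> feat P SX"
abbreviation "U \<equiv> PiM {..<N} (\<lambda>_. PX)"
abbreviation "G \<equiv> grad l th"
abbreviation "fb \<equiv> fbar T (fpred A n k 1)"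

lemma sets_PX[measurable_cong]: "sets PX = sets SX"
  by (simp add: feat_def)

lemma prob_space_PX: "prob_space PX"
  unfolding feat_def
  by (rule prob_space.prob_space_distr[OF P]) (use measurable_cong_sets[OF sets_P refl] in blast)

lemma prob_space_T: "prob_space T"
  unfolding train_space_def by (intro prob_space_pair R prob_space_PiM P)

lemma prob_space_V: "prob_space V"
  by (intro prob_space_pair R prob_space_PiM P)

lemma prob_space_U: "prob_space U"
  by (intro prob_space_PiM prob_space_PX)

declare measurable_grad[measurable] measurable_A[measurable]

lemma measurable_fold[measurable]: "(\<lambda>w. (fst w, fold_train n k j (snd w))) \<in> measurable T V"
  unfolding train_space_def by measurable

lemma measurable_fpred[measurable]: "(\<lambda>(w, x). fpred A n k j w x) \<in> borel_measurable (T \<Otimes>\<^sub>M SX)"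
proof -
  have "(\<lambda>(v, x). A (fst v) (snd v) x) \<circ> (\<lambda>(w, x). ((fst w, fold_train n k j (snd w)), x))
      \<in> borel_measurable (T \<Otimes>\<^sub>M SX)"
    by (rule measurable_comp[OF _ measurable_A]) measurable
  then show ?thesis
    by (simp add: fpred_def o_def split_beta')
qed

lemma measurable_fbar[measurable]: "fb \<in> borel_measurable SX"
proof -
  interpret T: prob_space T by (rule prob_space_T)
  show ?thesis
    unfolding fbar_def using measurable_fpred[of 1]
    by (intro T.borel_measurable_lebesgue_integral) (simp add: measurable_pair_swap_iff[symmetric] split_beta')
qed

lemma measurable_integral_PX:
  fixes g :: "'r \<times> (nat \<Rightarrow> 'x \<times> 'y) \<Rightarrow> 'x \<Rightarrow> 'b::{banach, second_countable_topology}"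
  assumes "(\<lambda>(v, x). g v x) \<in> borel_measurable (V \<Otimes>\<^sub>M SX)"
  shows "(\<lambda>v. \<integral>x. g v x \<partial>PX) \<in> borel_measurable V"
proof -
  interpret PX: prob_space PX by (rule prob_space_PX)
  show ?thesis
    using assms measurable_cong_sets[OF sets_pair_measure_cong[OF refl sets_PX] refl]
    by (intro PX.borel_measurable_lebesgue_integral) (simp add: split_beta')
qed

lemma nn_integral_fold_train:
  assumes "h \<in> borel_measurable V"
  shows "(\<integral>\<^sup>+w. h (fst w, fold_train n k j (snd w)) \<partial>T) = (\<integral>\<^sup>+v. h v \<partial>V)"
proof -
  have "(\<integral>\<^sup>+v. h v \<partial>V) = (\<integral>\<^sup>+v. h v \<partial>distr T V (\<lambda>w. (fst w, fold_train n k j (snd w))))"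
    by (simp add: distr_train_space_fold_train[OF P R])
  also have "\<dots> = (\<integral>\<^sup>+w. h (fst w, fold_train n k j (snd w)) \<partial>T)"
    by (rule nn_integral_distr) (use assms in simp_all)
  finally show ?thesis ..
qed

lemma measurable_G_A[measurable]: "(\<lambda>(v, x). G x (A (fst v) (snd v) x)) \<in> borel_measurable (V \<Otimes>\<^sub>M SX)"
  by measurable

lemma measurable_integral_G_A[measurable]: "(\<lambda>v. \<integral>x. G x (A (fst v) (snd v) x) \<partial>PX) \<in> borel_measurable V"
  using measurable_integral_PX[OF measurable_G_A] .

lemma measurable_Ltil[measurable]:
  "(\<lambda>(v, u). Ltil PX G N (A (fst v) (snd v)) fb u) \<in> borel_measurable (V \<Otimes>\<^sub>M U)"
  unfolding Ltil_def split_beta' by measurable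

lemma measurable_condvar[measurable]:
  "(\<lambda>v. condvar PX G (A (fst v) (snd v)) fb c) \<in> borel_measurable V"
proof -
  have "(\<lambda>v. \<integral>x. ((G x (A (fst v) (snd v) x) - G x (fb x)) $ c) ^ p \<partial>PX) \<in> borel_measurable V" for p :: nat
    by (rule measurable_integral_PX) measurable
  from this[of 1] this[of 2] show ?thesis
    unfolding condvar_def by simp
qed

lemma AE_square_integrable_grad_A:
  "AE v in V. integrable PX (\<lambda>x. (norm (G x (A (fst v) (snd v) x)))\<^sup>2)"
proof -
  interpret PX: prob_space PX by (rule prob_space_PX)
  interpret V: prob_space V by (rule prob_space_V)
  interpret VX: pair_sigma_finite V PX ..
  let ?\<phi> = "\<lambda>(w, x). ((fst w, fold_train n k 1 (snd w)), x)"
  have \<phi>: "?\<phi> \<in> measurable (T \<Otimes>\<^sub>M PX) (V \<Otimes>\<^sub>M PX)"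
    by measurable
  have h: "(\<lambda>(v, x). (norm (G x (A (fst v) (snd v) x)))\<^sup>2) \<in> borel_measurable (V \<Otimes>\<^sub>M PX)"
    using measurable_cong_sets[OF sets_pair_measure_cong[OF refl sets_PX] refl] by measurable
  have "distr T V (\<lambda>w. (fst w, fold_train n k 1 (snd w))) \<Otimes>\<^sub>M distr PX PX (\<lambda>x. x) = distr (T \<Otimes>\<^sub>M PX) (V \<Otimes>\<^sub>M PX) ?\<phi>"
    by (rule pair_measure_distr) (auto simp: PX.sigma_finite_measure_axioms)
  then have distr_\<phi>: "distr (T \<Otimes>\<^sub>M PX) (V \<Otimes>\<^sub>M PX) ?\<phi> = V \<Otimes>\<^sub>M PX"
    by (simp add: distr_train_space_fold_train[OF P R])
  have "integrable (distr (T \<Otimes>\<^sub>M PX) (V \<Otimes>\<^sub>M PX) ?\<phi>) (\<lambda>(v, x). (norm (G x (A (fst v) (snd v) x)))\<^sup>2)"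
    using square_integrable_grad_f by (subst integrable_distr_eq[OF \<phi> h]) (simp add: fpred_def split_beta')
  then have "integrable (V \<Otimes>\<^sub>M PX) (\<lambda>(v, x). (norm (G x (A (fst v) (snd v) x)))\<^sup>2)"
    unfolding distr_\<phi> .
  from VX.AE_integrable_fst'[OF this] show ?thesis
    by simp
qed

lemma measurable_Ltil_fpred[measurable]:
  "(\<lambda>\<omega>. Ltil PX G N (fpred A n k j (fst \<omega>)) fb (snd \<omega>)) \<in> borel_measurable (T \<Otimes>\<^sub>M U)"
proof -
  have "(\<lambda>(v, u). Ltil PX G N (A (fst v) (snd v)) fb u) \<circ> (\<lambda>(w, u). ((fst w, fold_train n k j (snd w)), u))
      \<in> borel_measurable (T \<Otimes>\<^sub>M U)"
    by (rule measurable_comp[OF _ measurable_Ltil]) measurable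
  then show ?thesis
    by (simp add: o_def fpred_def split_beta')
qed

lemma nn_integral_abs_Ltil_fold_le:
  "(\<integral>\<^sup>+\<omega>. ennreal \<bar>Ltil PX G N (fpred A n k j (fst \<omega>)) fb (snd \<omega>) $ c\<bar> \<partial>(T \<Otimes>\<^sub>M U))
     \<le> (\<integral>\<^sup>+w. ennreal (sqrt (condvar PX G (fpred A n k 1 w) fb c)) \<partial>T)"
proof -
  interpret U: prob_space U by (rule prob_space_U)
  interpret T: prob_space T by (rule prob_space_T)
  interpret TU: pair_sigma_finite T U ..
  define H where "H v = (\<integral>\<^sup>+u. ennreal \<bar>Ltil PX G N (A (fst v) (snd v)) fb u $ c\<bar> \<partial>U)" for v
  have "(\<lambda>(v, u). ennreal \<bar>Ltil PX G N (A (fst v) (snd v)) fb u $ c\<bar>) \<in> borel_measurable (V \<Otimes>\<^sub>M U)"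
    by measurable
  then have Hm: "H \<in> borel_measurable V"
    unfolding H_def using U.borel_measurable_nn_integral_fst by simp
  have "(\<integral>\<^sup>+\<omega>. ennreal \<bar>Ltil PX G N (fpred A n k j (fst \<omega>)) fb (snd \<omega>) $ c\<bar> \<partial>(T \<Otimes>\<^sub>M U))
      = (\<integral>\<^sup>+w. \<integral>\<^sup>+u. ennreal \<bar>Ltil PX G N (fpred A n k j w) fb u $ c\<bar> \<partial>U \<partial>T)"
    by (subst U.nn_integral_fst[symmetric]) measurable
  also have "\<dots> = (\<integral>\<^sup>+w. H (fst w, fold_train n k j (snd w)) \<partial>T)"
    by (simp add: H_def fpred_def)
  also have "\<dots> = (\<integral>\<^sup>+v. H v \<partial>V)"
    by (rule nn_integral_fold_train[OF Hm])
  also have "\<dots> \<le> (\<integral>\<^sup>+v. ennreal (sqrt (condvar PX G (A (fst v) (snd v)) fb c)) \<partial>V)"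
  proof (rule nn_integral_mono_AE)
    show "AE v in V. H v \<le> ennreal (sqrt (condvar PX G (A (fst v) (snd v)) fb c))"
      using AE_square_integrable_grad_A AE_space
    proof eventually_elim
      case (elim v)
      have "Pair v \<in> measurable PX (V \<Otimes>\<^sub>M SX)"
        unfolding measurable_cong_sets[OF sets_PX refl] by (rule measurable_Pair1'[OF elim(2)])
      from measurable_comp[OF this measurable_G_A]
      have "(\<lambda>x. G x (A (fst v) (snd v) x)) \<in> borel_measurable PX"
        by (simp add: o_def)
      moreover have "(\<lambda>x. G x (fb x)) \<in> borel_measurable PX"
        unfolding measurable_cong_sets[OF sets_PX refl] by measurable
      ultimately show ?case
        unfolding H_def
        by (rule nn_integral_abs_Ltil_component_le[where G = G and f = "A (fst v) (snd v)" and fb = fb,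
              OF prob_space_PX _ _ elim(1) square_integrable_grad_fbar])
    qed
  qed
  also have "\<dots> = (\<integral>\<^sup>+w. ennreal (sqrt (condvar PX G (fpred A n k 1 w) fb c)) \<partial>T)"
    by (subst nn_integral_fold_train[where j = 1, symmetric]) (measurable, simp add: fpred_def)
  finally show ?thesis .
qed

lemma Markov_average_Ltil:
  assumes e: "0 < e"
  shows "ennreal e * emeasure (T \<Otimes>\<^sub>M U) {\<omega> \<in> space (T \<Otimes>\<^sub>M U).
           e < norm ((1 / real k) *\<^sub>R (\<Sum>j=1..k. Ltil PX G N (fpred A n k j (fst \<omega>)) fb (snd \<omega>)))}
      \<le> (\<Sum>c\<in>UNIV. \<integral>\<^sup>+w. ennreal (sqrt (real k * condvar PX G (fpred A n k 1 w) fb c)) \<partial>T)"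
proof -
  define L where "L j \<omega> c = \<bar>Ltil PX G N (fpred A n k j (fst \<omega>)) fb (snd \<omega>) $ c\<bar>" for j \<omega> c
  define I where "I c = (\<integral>\<^sup>+w. ennreal (sqrt (condvar PX G (fpred A n k 1 w) fb c)) \<partial>T)" for c
  have Lm[measurable]: "(\<lambda>\<omega>. L j \<omega> c) \<in> borel_measurable (T \<Otimes>\<^sub>M U)" for j c
    unfolding L_def by measurable
  have "ennreal e * emeasure (T \<Otimes>\<^sub>M U) {\<omega> \<in> space (T \<Otimes>\<^sub>M U).
           e < norm ((1 / real k) *\<^sub>R (\<Sum>j=1..k. Ltil PX G N (fpred A n k j (fst \<omega>)) fb (snd \<omega>)))}
      \<le> (\<integral>\<^sup>+\<omega>. (\<Sum>c\<in>UNIV. \<Sum>j=1..k. ennreal (1 / real k) * ennreal (L j \<omega> c)) \<partial>(T \<Otimes>\<^sub>M U))"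
  proof (rule Markov_emeasure_le_nn_integral)
    fix \<omega>
    assume "e < norm ((1 / real k) *\<^sub>R (\<Sum>j=1..k. Ltil PX G N (fpred A n k j (fst \<omega>)) fb (snd \<omega>)))"
    then have "e \<le> (\<Sum>c\<in>UNIV. \<Sum>j=1..k. (1 / real k) * L j \<omega> c)"
      using norm_scaleR_sum_le_sum_abs_components[of "1 / real k"
          "\<lambda>j. Ltil PX G N (fpred A n k j (fst \<omega>)) fb (snd \<omega>)" "{1..k}"]
      by (simp add: L_def)
    then show "ennreal e \<le> (\<Sum>c\<in>UNIV. \<Sum>j=1..k. ennreal (1 / real k) * ennreal (L j \<omega> c))"
      by (simp add: ennreal_leI sum_nonneg L_def flip: ennreal_mult)
  qed
  also have "\<dots> = (\<Sum>c\<in>UNIV. \<Sum>j=1..k. ennreal (1 / real k) * (\<integral>\<^sup>+\<omega>. L j \<omega> c \<partial>(T \<Otimes>\<^sub>M U)))"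
    by (simp add: nn_integral_sum nn_integral_cmult)
  also have "\<dots> \<le> (\<Sum>c\<in>UNIV. \<Sum>j=1..k. ennreal (1 / real k) * I c)"
    unfolding L_def I_def by (intro sum_mono mult_left_mono nn_integral_abs_Ltil_fold_le) simp
  also have "\<dots> = (\<Sum>c\<in>UNIV. I c)"
    using k by (simp add: mult.assoc[symmetric] ennreal_of_nat_eq_real_of_nat flip: ennreal_mult)
  also have "\<dots> \<le> (\<Sum>c\<in>UNIV. \<integral>\<^sup>+w. ennreal (sqrt (real k * condvar PX G (fpred A n k 1 w) fb c)) \<partial>T)"
    unfolding I_def using k by (intro sum_mono nn_integral_mono ennreal_sqrt_le_sqrt_mult) simp
  finally show ?thesis .
qed

end

theorem lemma3:
  fixes l :: "real^'d \<Rightarrow> 'x \<Rightarrow> 'y::euclidean_space \<Rightarrow> real"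
    and th :: "real^'d"
    and P :: "('x \<times> 'y) measure" and SX :: "'x measure"
    and R :: "'r measure"
    and A :: "nat \<Rightarrow> 'r \<Rightarrow> (nat \<Rightarrow> 'x \<times> 'y) \<Rightarrow> 'x \<Rightarrow> 'y"
    and K N :: "nat \<Rightarrow> nat"
  assumes P: "prob_space P" and setsP: "sets P = sets (SX \<Otimes>\<^sub>M (borel :: 'y measure))"
    and R: "prob_space R"
    and K: "\<And>n. 0 < K n \<and> K n dvd n"
    and N: "\<And>n. 0 < N n"
    and diff: "\<And>x y. (\<lambda>t. l t x y) differentiable (at th)"
    and Gmeas: "(\<lambda>(x, y). grad l th x y) \<in> borel_measurable (SX \<Otimes>\<^sub>M borel)"
    and Ameas: "\<And>n. (\<lambda>(w, x). A n (fst w) (snd w) x)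
                  \<in> borel_measurable ((R \<Otimes>\<^sub>M PiM {..<n - n div K n} (\<lambda>_. P)) \<Otimes>\<^sub>M SX)"
    and mom_f: "\<And>n x. integrable (train_space R P n)
                  (\<lambda>w. (norm (fpred (A n) n (K n) 1 w x))\<^sup>2)"
    and mom_Gf: "\<And>n. integrable (train_space R P n \<Otimes>\<^sub>M feat P SX)
                  (\<lambda>(w, x). (norm (grad l th x (fpred (A n) n (K n) 1 w x)))\<^sup>2)"
    and mom_Gfbar: "\<And>n. integrable (feat P SX)
                  (\<lambda>x. (norm (grad l th x (fbar (train_space R P n) (fpred (A n) n (K n) 1) x)))\<^sup>2)"
    and stable: "\<And>c. (\<lambda>n. \<integral>\<^sup>+ w. ennreal (sqrt (real (K n) *
                    condvar (feat P SX) (grad l th) (fpred (A n) n (K n) 1 w)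
                      (fbar (train_space R P n) (fpred (A n) n (K n) 1)) c)) \<partial>(train_space R P n))
                  \<longlonglongrightarrow> 0"
  shows "\<forall>e>0. (\<lambda>n. measure (full_space R P SX (N n) n)
           {\<omega> \<in> space (full_space R P SX (N n) n).
              norm ((1 / real (K n)) *\<^sub>R (\<Sum>j=1..K n.
                 Ltil (feat P SX) (grad l th) (N n) (fpred (A n) n (K n) j (fst \<omega>))
                   (fbar (train_space R P n) (fpred (A n) n (K n) 1)) (snd \<omega>))) > e})
         \<longlonglongrightarrow> 0"
proof -
  have setting: "cross_fitting l th P SX R (A n) n (K n)" for n
    using P setsP R K[THEN conjunct1] Gmeas Ameas mom_Gf mom_Gfbar by (simp add: cross_fitting_def)
  have stable_sum: "(\<lambda>n. \<Sum>c\<in>UNIV. \<integral>\<^sup>+ w. ennreal (sqrt (real (K n) *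
                    condvar (feat P SX) (grad l th) (fpred (A n) n (K n) 1 w)
                      (fbar (train_space R P n) (fpred (A n) n (K n) 1)) c)) \<partial>(train_space R P n))
          \<longlonglongrightarrow> 0"
    using tendsto_sum[of UNIV, OF stable] by simp
  show ?thesis
    by (rule tendsto_measure_zero_of_Markov_bound[OF _ stable_sum])
       (rule cross_fitting.Markov_average_Ltil[OF setting, folded full_space_def])
qed

end
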